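(* No finite subset of $T$ containing at least two points is full.
   Context: Let $X_1,X_2,X_3$ be pairwise disjoint nonempty sets and $\Omega=X_1\times X_2\times X_3$, with projections $\Pi_i:\Omega\to X_i$. A set $S\subset\Omega$ is good if every function $f:S\to\mathbb C$ can be written $f(w_1,w_2,w_3)=u_1(w_1)+u_2(w_2)+u_3(w_3)$ for all $(w_1,w_2,w_3)\in S$, for some functions $u_i:X_i\to\mathbb C$. A set $S$ is full if it is a maximal good subset of $\Pi_1S\times\Pi_2S\times\Pi_3S$. Construction: fix pairwise distinct elements $x_1,y_1,\alpha_{5k-4},\alpha_{5k-1}$ ($k\ge1$) of $X_1$; pairwise distinct elements $x_2,y_2,\alpha_{5k-3},\alpha_{5k}$ ($k\ge1$) of $X_2$; pairwise distinct elements $x_3,z_3,\alpha_{5k-2}$ ($k\ge1$) of $X_3$. Set the convention $\alpha_{-3}:=y_2$, $\alpha_{-2}:=z_3$. Define $a_1=(x_1,x_2,x_3)$, $a_2=(y_1,y_2,x_3)$, $a_3=(y_1,x_2,z_3)$ and for $n\ge1$: $a_{5n-1}=(\alpha_{5n-4},\alpha_{5n-3},\alpha_{5n-2})$, $a_{5n}=(\alpha_{5n-1},\alpha_{5n},\alpha_{5n-2})$, $a_{5n+1}=(\alpha_{5n-4},\alpha_{5n},\alpha_{5n-7})$, $a_{5n+2}=(\alpha_{5n-1},\alpha_{5n-3},x_3)$, $a_{5n+3}=(x_1,\alpha_{5n-8},\alpha_{5n-2})$. Let $T=\{a_i:i\ge1\}$. *)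

theory Defs
  imports Complex_Main
begin

text \<open>Elements of X1, X2, X3 all live in one type 'a; points of Omega are triples.\<close>

definition good :: "('a \<times> 'a \<times> 'a) set \<Rightarrow> bool" where
  "good S \<longleftrightarrow> (\<forall>f :: 'a \<times> 'a \<times> 'a \<Rightarrow> complex.
      \<exists>u1 u2 u3 :: 'a \<Rightarrow> complex.
        \<forall>w1 w2 w3. (w1, w2, w3) \<in> S \<longrightarrow> f (w1, w2, w3) = u1 w1 + u2 w2 + u3 w3)"

definition proj1 :: "('a \<times> 'a \<times> 'a) set \<Rightarrow> 'a set" where
  "proj1 S = (\<lambda>(w1, w2, w3). w1) ` S"
definition proj2 :: "('a \<times> 'a \<times> 'a) set \<Rightarrow> 'a set" where
  "proj2 S = (\<lambda>(w1, w2, w3). w2) ` S"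
definition proj3 :: "('a \<times> 'a \<times> 'a) set \<Rightarrow> 'a set" where
  "proj3 S = (\<lambda>(w1, w2, w3). w3) ` S"

definition full :: "('a \<times> 'a \<times> 'a) set \<Rightarrow> bool" where
  "full S \<longleftrightarrow> good S \<and>
     (\<forall>S'. S \<subseteq> S' \<and> S' \<subseteq> proj1 S \<times> proj2 S \<times> proj3 S \<and> good S' \<longrightarrow> S' = S)"

text \<open>The sequence a_i (i \<ge> 1, integer index); alpha is indexed by integers,
  with alpha(-3) = y2 and alpha(-2) = z3 imposed as hypotheses of the theorem.\<close>
definition seqT :: "'a \<Rightarrow> 'a \<Rightarrow> 'a \<Rightarrow> 'a \<Rightarrow> 'a \<Rightarrow> 'a \<Rightarrow> (int \<Rightarrow> 'a) \<Rightarrow> int \<Rightarrow> 'a \<times> 'a \<times> 'a" where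
  "seqT x1 y1 x2 y2 x3 z3 \<alpha> i =
    (if i = 1 then (x1, x2, x3)
     else if i = 2 then (y1, y2, x3)
     else if i = 3 then (y1, x2, z3)
     else (let n = (i + 1) div 5; r = (i + 1) mod 5 in
       if r = 0 then (\<alpha> (5*n-4), \<alpha> (5*n-3), \<alpha> (5*n-2))
       else if r = 1 then (\<alpha> (5*n-1), \<alpha> (5*n), \<alpha> (5*n-2))
       else if r = 2 then (\<alpha> (5*n-4), \<alpha> (5*n), \<alpha> (5*n-7))
       else if r = 3 then (\<alpha> (5*n-1), \<alpha> (5*n-3), x3)
       else (x1, \<alpha> (5*n-8), \<alpha> (5*n-2))))"

definition setT :: "'a \<Rightarrow> 'a \<Rightarrow> 'a \<Rightarrow> 'a \<Rightarrow> 'a \<Rightarrow> 'a \<Rightarrow> (int \<Rightarrow> 'a) \<Rightarrow> ('a \<times> 'a \<times> 'a) set" where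
  "setT x1 y1 x2 y2 x3 z3 \<alpha> = {seqT x1 y1 x2 y2 x3 z3 \<alpha> i | i. i \<ge> 1}"

end

theory Submission
  imports Defs
begin

text \<open>
  A finite set S of triples is not full as soon as it admits a
  "linear relation": weights d1, d2, d3 on the three coordinates with
  d1 w1 + d2 w2 + d3 w3 = 0 for every (w1,w2,w3) in S, such that two points of S
  have different coordinate weights.  Indeed, if S were full, every point of the
  box Pi1 S x Pi2 S x Pi3 S would have to satisfy the relation too (otherwise it
  could be added keeping S good), and applying this to mixed points of two
  points of S forces their coordinate weights to agree.

  Then, for
  the construction T, it classifies the points of T (three base points and the
  points P m, Q m, R m, U m, V m), and exhibits a relation in each case:
  S meets some level {P m, Q m, R m, U m} (take the top level n, and either the
  square relation or a "cut" relation separating level n from the rest);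
  S contains some V k with k \<ge> 2; or S lies among the base points and V 1
  (again a square).
\<close>

definition weigh :: "('a \<Rightarrow> complex) \<Rightarrow> ('a \<Rightarrow> complex) \<Rightarrow> ('a \<Rightarrow> complex) \<Rightarrow> 'a \<times> 'a \<times> 'a \<Rightarrow> complex" where
  "weigh d1 d2 d3 w = d1 (fst w) + d2 (fst (snd w)) + d3 (snd (snd w))"

definition profile :: "('a \<Rightarrow> complex) \<Rightarrow> ('a \<Rightarrow> complex) \<Rightarrow> ('a \<Rightarrow> complex) \<Rightarrow> 'a \<times> 'a \<times> 'a \<Rightarrow> complex \<times> complex \<times> complex" where
  "profile d1 d2 d3 w = (d1 (fst w), d2 (fst (snd w)), d3 (snd (snd w)))"

lemma weigh_triple [simp]: "weigh d1 d2 d3 (a, b, c) = d1 a + d2 b + d3 c"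
  by (simp add: weigh_def)

lemma profile_triple [simp]: "profile d1 d2 d3 (a, b, c) = (d1 a, d2 b, d3 c)"
  by (simp add: profile_def)

text \<open>A point on which a relation of S does not vanish can be added to a good S:
  its value can be adjusted by a multiple of the relation.\<close>

lemma good_insert:
  assumes good: "good S"
    and rel: "\<forall>w\<in>S. weigh d1 d2 d3 w = 0"
    and p: "weigh d1 d2 d3 p \<noteq> 0"
  shows "good (insert p S)"
  unfolding good_def
proof
  fix f :: "'a \<times> 'a \<times> 'a \<Rightarrow> complex"
  obtain u1 u2 u3 where u: "\<And>w. w \<in> S \<Longrightarrow> f w = weigh u1 u2 u3 w"
    using good unfolding good_def by fastforce
  define c where "c = (f p - weigh u1 u2 u3 p) / weigh d1 d2 d3 p"
  define v1 v2 v3 where "v1 x = u1 x + c * d1 x" and "v2 x = u2 x + c * d2 x"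
    and "v3 x = u3 x + c * d3 x" for x
  have shift: "weigh v1 v2 v3 w = weigh u1 u2 u3 w + c * weigh d1 d2 d3 w" for w
    by (simp add: weigh_def v1_def v2_def v3_def algebra_simps)
  have "f w = weigh v1 v2 v3 w" if "w \<in> insert p S" for w
  proof (cases "w \<in> S")
    case True
    then show ?thesis using u rel shift by simp
  next
    case False
    with that have "w = p" by simp
    then show ?thesis using p shift by (simp add: c_def)
  qed
  then show "\<exists>u1 u2 u3. \<forall>w1 w2 w3. (w1, w2, w3) \<in> insert p S \<longrightarrow>
      f (w1, w2, w3) = u1 w1 + u2 w2 + u3 w3"
    by (intro exI[of _ v1] exI[of _ v2] exI[of _ v3]) auto
qed

lemma triple_in_box:
  assumes "(a, b, c) \<in> S" "(a', b', c') \<in> S" "(a'', b'', c'') \<in> S"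
  shows "(a, b', c'') \<in> proj1 S \<times> proj2 S \<times> proj3 S"
  using assms unfolding proj1_def proj2_def proj3_def by (force intro: rev_image_eqI)

lemma full_relation_extends:
  assumes full: "full S"
    and rel: "\<forall>w\<in>S. weigh d1 d2 d3 w = 0"
    and box: "p \<in> proj1 S \<times> proj2 S \<times> proj3 S"
  shows "weigh d1 d2 d3 p = 0"
proof (rule ccontr)
  assume p: "weigh d1 d2 d3 p \<noteq> 0"
  have "good (insert p S)"
    using full rel p by (intro good_insert) (auto simp: full_def)
  moreover have "S \<subseteq> proj1 S \<times> proj2 S \<times> proj3 S"
    using triple_in_box by fast
  ultimately have "insert p S = S"
    using full box unfolding full_def by blast
  then show False using rel p by blast
qed

lemma not_full_by_relation:
  assumes rel: "\<forall>w\<in>S. weigh d1 d2 d3 w = 0"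
    and q: "q \<in> S" and q': "q' \<in> S"
    and differ: "profile d1 d2 d3 q \<noteq> profile d1 d2 d3 q'"
  shows "\<not> full S"
proof
  assume full: "full S"
  obtain a b c a' b' c' where qs: "q = (a, b, c)" "q' = (a', b', c')"
    by (cases q, cases q')
  from q q' have abc: "(a, b, c) \<in> S" and abc': "(a', b', c') \<in> S" by (simp_all add: qs)
  note on_box = full_relation_extends[OF full rel]
  have "weigh d1 d2 d3 (a, b', c') = 0" by (rule on_box[OF triple_in_box[OF abc abc' abc']])
  moreover have "weigh d1 d2 d3 (a', b, c') = 0" by (rule on_box[OF triple_in_box[OF abc' abc abc']])
  moreover have "weigh d1 d2 d3 (a', b', c) = 0" by (rule on_box[OF triple_in_box[OF abc' abc' abc]])
  moreover have "weigh d1 d2 d3 (a', b', c') = 0" using rel abc' by blast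
  ultimately have "d1 a = d1 a'" "d2 b = d2 b'" "d3 c = d3 c'"
    by (simp_all add: add_eq_0_iff2 add.commute[of _ "d3 _"] add.left_commute[of _ "d3 _"])
  then show False using differ qs by simp
qed

lemma not_full_square:
  assumes "a \<noteq> a'" "b \<noteq> b'" "c \<noteq> c'" "c \<noteq> c''" "c' \<noteq> c''"
    and S: "S \<subseteq> {(a, b, c), (a', b', c), (a, b', c'), (a', b, c'')}"
    and q: "q \<in> S" and q': "q' \<in> S" and "q \<noteq> q'"
  shows "\<not> full S"
proof -
  define d1 d2 d3 :: "'a \<Rightarrow> complex"
    where "d1 x = of_bool (x = a')" and "d2 x = - of_bool (x = b')"
      and "d3 x = of_bool (x = c') - of_bool (x = c'')" for x
  have rel: "\<forall>w\<in>S. weigh d1 d2 d3 w = 0"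
    using S assms(1-5) by (auto simp: d1_def d2_def d3_def)
  have "inj_on (profile d1 d2 d3) {(a, b, c), (a', b', c), (a, b', c'), (a', b, c'')}"
    using assms(1-5) by (simp add: d1_def d2_def d3_def)
  then have "profile d1 d2 d3 q \<noteq> profile d1 d2 d3 q'"
    using S q q' \<open>q \<noteq> q'\<close> by (meson inj_onD subsetD)
  then show ?thesis using not_full_by_relation[OF rel q q'] by blast
qed

definition indices :: "int set" where
  "indices = {i. 1 \<le> i \<or> i = -3 \<or> i = -2}"

locale construction =
  fixes x1 y1 x2 y2 x3 z3 :: 'a and \<alpha> :: "int \<Rightarrow> 'a"
  assumes x1_y1: "x1 \<noteq> y1"
    and alpha_inj: "inj_on \<alpha> indices"
    and alpha_avoids: "\<And>i. i \<in> indices \<Longrightarrow> \<alpha> i \<notin> {x1, y1, x2, x3}"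
    and alpha_y2: "\<alpha> (-3) = y2" and alpha_z3: "\<alpha> (-2) = z3"
begin

abbreviation T :: "('a \<times> 'a \<times> 'a) set" where
  "T \<equiv> setT x1 y1 x2 y2 x3 z3 \<alpha>"

lemma alpha_eq_iff [simp]: "i \<in> indices \<Longrightarrow> j \<in> indices \<Longrightarrow> \<alpha> i = \<alpha> j \<longleftrightarrow> i = j"
  using alpha_inj by (auto dest: inj_onD)

lemma alpha_ne_consts [simp]:
  "i \<in> indices \<Longrightarrow> \<alpha> i \<noteq> x1" "i \<in> indices \<Longrightarrow> \<alpha> i \<noteq> y1"
  "i \<in> indices \<Longrightarrow> \<alpha> i \<noteq> x2" "i \<in> indices \<Longrightarrow> \<alpha> i \<noteq> x3"
  "i \<in> indices \<Longrightarrow> x1 \<noteq> \<alpha> i" "i \<in> indices \<Longrightarrow> y1 \<noteq> \<alpha> i"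
  "i \<in> indices \<Longrightarrow> x2 \<noteq> \<alpha> i" "i \<in> indices \<Longrightarrow> x3 \<noteq> \<alpha> i"
  using alpha_avoids by fastforce+

lemma indices_of_level [simp]:
  assumes "1 \<le> m"
  shows "5*m-8 \<in> indices" "5*m-7 \<in> indices" "5*m-4 \<in> indices" "5*m-3 \<in> indices"
    "5*m-2 \<in> indices" "5*m-1 \<in> indices" "5*m \<in> indices" "5*m+3 \<in> indices"
  using assms by (auto simp: indices_def)

lemma boundary_indices [simp]: "-3 \<in> indices" "-2 \<in> indices"
  by (simp_all add: indices_def)

text \<open>The points a(5m-1), ..., a(5m+3) of T, and the level m = {P m, Q m, R m, U m}.\<close>

definition P :: "int \<Rightarrow> 'a \<times> 'a \<times> 'a" where "P m = (\<alpha> (5*m-4), \<alpha> (5*m-3), \<alpha> (5*m-2))"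
definition Q :: "int \<Rightarrow> 'a \<times> 'a \<times> 'a" where "Q m = (\<alpha> (5*m-1), \<alpha> (5*m), \<alpha> (5*m-2))"
definition R :: "int \<Rightarrow> 'a \<times> 'a \<times> 'a" where "R m = (\<alpha> (5*m-4), \<alpha> (5*m), \<alpha> (5*m-7))"
definition U :: "int \<Rightarrow> 'a \<times> 'a \<times> 'a" where "U m = (\<alpha> (5*m-1), \<alpha> (5*m-3), x3)"
definition V :: "int \<Rightarrow> 'a \<times> 'a \<times> 'a" where "V m = (x1, \<alpha> (5*m-8), \<alpha> (5*m-2))"

definition level :: "int \<Rightarrow> ('a \<times> 'a \<times> 'a) set" where
  "level m = {P m, Q m, R m, U m}"

lemma setT_cases:
  assumes "w \<in> T"
  obtains "w \<in> {(x1, x2, x3), (y1, y2, x3), (y1, x2, z3)}"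
    | m where "1 \<le> m" "w \<in> level m"
    | m where "1 \<le> m" "w = V m"
proof -
  obtain i where i: "1 \<le> i" "w = seqT x1 y1 x2 y2 x3 z3 \<alpha> i"
    using assms unfolding setT_def by blast
  show thesis
  proof (cases "i \<le> 3")
    case True
    then have "i = 1 \<or> i = 2 \<or> i = 3" using i by auto
    then show thesis using i that(1) unfolding seqT_def by auto
  next
    case False
    define n r where "n = (i + 1) div 5" and "r = (i + 1) mod 5"
    have n: "1 \<le> n" using False unfolding n_def by auto
    have i_nr: "i = 5*n + r - 1" "0 \<le> r" "r < 5" unfolding n_def r_def by auto
    then have "r = 0 \<or> r = 1 \<or> r = 2 \<or> r = 3 \<or> r = 4" by auto
    then have "w \<in> level n \<or> w = V n"
      using i False
      unfolding seqT_def level_def P_def Q_def R_def U_def V_def Let_def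
        n_def[symmetric] r_def[symmetric]
      by (elim disjE) (simp_all add: i_nr(1) algebra_simps)
    then show thesis using n that(2,3) by blast
  qed
qed

text \<open>It vanishes on
  every point of T that lies in no level above n (the only exceptions are
  P(n+1), Q(n+1), R(n+2)), and its first-coordinate weight detects exactly the
  points of level n.\<close>

definition cut1 :: "int \<Rightarrow> 'a \<Rightarrow> complex" where
  "cut1 n x = of_bool (x = \<alpha> (5*n-4)) + of_bool (x = \<alpha> (5*n-1))"
definition cut2 :: "int \<Rightarrow> 'a \<Rightarrow> complex" where
  "cut2 n x = - of_bool (x = \<alpha> (5*n-3)) - of_bool (x = \<alpha> (5*n))"
definition cut3 :: "int \<Rightarrow> 'a \<Rightarrow> complex" where
  "cut3 n x = of_bool (x = \<alpha> (5*n+3))"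

lemma cut_relation:
  assumes "w \<in> T" "1 \<le> n" "\<And>m. n < m \<Longrightarrow> w \<notin> level m"
  shows "weigh (cut1 n) (cut2 n) (cut3 n) w = 0"
  using assms(1)
proof (cases rule: setT_cases)
  case 1
  then show ?thesis using assms(2)
    by (auto simp: cut1_def cut2_def cut3_def simp flip: alpha_y2 alpha_z3)
next
  case (2 m)
  then show ?thesis using assms(2) assms(3)[of m]
    by (auto simp: level_def P_def Q_def R_def U_def cut1_def cut2_def cut3_def; presburger)
next
  case (3 m)
  then show ?thesis using assms(2)
    by (auto simp: V_def cut1_def cut2_def cut3_def; presburger)
qed

lemma cut1_on_level:
  assumes "1 \<le> n" "w \<in> level n"
  shows "cut1 n (fst w) = 1"
  using assms by (auto simp: cut1_def level_def P_def Q_def R_def U_def)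

lemma cut1_off_level:
  assumes "w \<in> T" "1 \<le> n" "w \<notin> level n"
  shows "cut1 n (fst w) = 0"
  using assms(1)
proof (cases rule: setT_cases)
  case 1
  then show ?thesis using assms(2) by (auto simp: cut1_def)
next
  case (2 m)
  with assms(3) have "m \<noteq> n" by blast
  with 2 show ?thesis using assms(2)
    by (auto simp: level_def P_def Q_def R_def U_def cut1_def; presburger)
next
  case (3 m)
  then show ?thesis using assms(2) by (simp add: V_def cut1_def)
qed

text \<open>Case 1: S meets some level; n is its top level.  If S stays inside level n,
  use the square relation, otherwise the cut relation at level n.\<close>

lemma not_full_top_level:
  assumes sub: "S \<subseteq> T" and n: "1 \<le> n"
    and top: "S \<inter> level n \<noteq> {}" and above: "\<And>m. n < m \<Longrightarrow> S \<inter> level m = {}"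
    and q: "q \<in> S" and q': "q' \<in> S" and "q \<noteq> q'"
  shows "\<not> full S"
proof (cases "S \<subseteq> level n")
  case True
  have "\<alpha> (5*n-4) \<noteq> \<alpha> (5*n-1)" "\<alpha> (5*n-3) \<noteq> \<alpha> (5*n)" "\<alpha> (5*n-2) \<noteq> \<alpha> (5*n-7)"
    "\<alpha> (5*n-2) \<noteq> x3" "\<alpha> (5*n-7) \<noteq> x3"
    using n by simp_all
  moreover have "level n = {(\<alpha> (5*n-4), \<alpha> (5*n-3), \<alpha> (5*n-2)), (\<alpha> (5*n-1), \<alpha> (5*n), \<alpha> (5*n-2)),
      (\<alpha> (5*n-4), \<alpha> (5*n), \<alpha> (5*n-7)), (\<alpha> (5*n-1), \<alpha> (5*n-3), x3)}"
    by (simp add: level_def P_def Q_def R_def U_def)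
  ultimately show ?thesis
    using not_full_square True q q' \<open>q \<noteq> q'\<close> by (metis (no_types, lifting))
next
  case False
  then obtain s where s: "s \<in> S" "s \<notin> level n" by blast
  obtain t where t: "t \<in> S" "t \<in> level n" using top by blast
  have "\<forall>w\<in>S. weigh (cut1 n) (cut2 n) (cut3 n) w = 0"
    using sub n above by (blast intro: cut_relation)
  moreover have "cut1 n (fst t) = 1" "cut1 n (fst s) = 0"
    using cut1_on_level[OF n t(2)] cut1_off_level[of s n] s sub n by auto
  then have "profile (cut1 n) (cut2 n) (cut3 n) t \<noteq> profile (cut1 n) (cut2 n) (cut3 n) s"
    by (simp add: profile_def)
  ultimately show ?thesis using not_full_by_relation s t by blast
qed

lemma top_level_exists:
  assumes "finite S" and "1 \<le> m" "S \<inter> level m \<noteq> {}"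
  obtains n where "1 \<le> n" "S \<inter> level n \<noteq> {}" "\<And>m. n < m \<Longrightarrow> S \<inter> level m = {}"
proof -
  define M where "M = {m. 1 \<le> m \<and> S \<inter> level m \<noteq> {}}"
  have "l \<in> (\<lambda>l. \<alpha> (5*l-4)) -` (fst ` S) \<inter> {1..} \<union> (\<lambda>l. \<alpha> (5*l-1)) -` (fst ` S) \<inter> {1..}"
    if "l \<in> M" for l
  proof -
    from that obtain w where "1 \<le> l" "w \<in> S" "w \<in> level l" by (auto simp: M_def)
    moreover have "fst w = \<alpha> (5*l-4) \<or> fst w = \<alpha> (5*l-1)"
      using \<open>w \<in> level l\<close> by (auto simp: level_def P_def Q_def R_def U_def)
    ultimately show ?thesis by (metis IntI UnCI atLeast_iff image_eqI vimageI)
  qed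
  moreover have "inj_on (\<lambda>l. \<alpha> (5*l-4)) {1..}" "inj_on (\<lambda>l. \<alpha> (5*l-1)) {1..}"
    by (auto simp: inj_on_def)
  ultimately have "finite M"
    using \<open>finite S\<close> by (meson finite_Un finite_imageI finite_vimage_IntI finite_subset subsetI)
  moreover have "m \<in> M" using assms(2,3) by (simp add: M_def)
  ultimately have top: "Max M \<in> M" and above: "\<And>l. l \<in> M \<Longrightarrow> l \<le> Max M"
    by (auto intro: Max_in)
  show thesis
  proof (rule that)
    show "1 \<le> Max M" "S \<inter> level (Max M) \<noteq> {}"
      using top by (simp_all add: M_def)
    show "S \<inter> level l = {}" if "Max M < l" for l
      using above[of l] that top by (force simp: M_def)
  qed
qed

text \<open>Case 2: S meets no level but contains V k with k \<ge> 2.  The relation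
  [a(5k-8)] - [a(5k-2)] on the last two coordinates vanishes on the base points and
  on all V m, and its second-coordinate weight singles out V k.\<close>

lemma not_full_high_V:
  assumes sub: "S \<subseteq> T" and no_levels: "\<And>m. 1 \<le> m \<Longrightarrow> S \<inter> level m = {}"
    and k: "2 \<le> k" and Vk: "V k \<in> S" and q: "q \<in> S" "q \<noteq> V k"
  shows "\<not> full S"
proof -
  define g1 g2 g3 :: "'a \<Rightarrow> complex"
    where "g1 x = 0" and "g2 x = of_bool (x = \<alpha> (5*k-8))"
      and "g3 x = - of_bool (x = \<alpha> (5*k-2))" for x
  have "weigh g1 g2 g3 w = 0 \<and> g2 (fst (snd w)) = of_bool (w = V k)" if "w \<in> S" for w
  proof -
    from that sub have "w \<in> T" by blast
    then show ?thesis
    proof (cases rule: setT_cases)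
      case 1
      then show ?thesis using k
        by (auto simp: g1_def g2_def g3_def V_def simp flip: alpha_y2 alpha_z3)
    next
      case (2 m)
      then show ?thesis using no_levels that by blast
    next
      case (3 m)
      then show ?thesis using k by (auto simp: g1_def g2_def g3_def V_def)
    qed
  qed
  then have "\<forall>w\<in>S. weigh g1 g2 g3 w = 0"
    and "profile g1 g2 g3 (V k) \<noteq> profile g1 g2 g3 q"
    using Vk q by (auto simp: profile_def)
  then show ?thesis using not_full_by_relation Vk q by blast
qed

text \<open>Case 3: S lies among the base points and V 1 = (x1, y2, a 3), a square.\<close>

lemma not_full_base:
  assumes "S \<subseteq> {(x1, x2, x3), (y1, y2, x3), (y1, x2, z3), V 1}"
    and "q \<in> S" "q' \<in> S" "q \<noteq> q'"
  shows "\<not> full S"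
proof (rule not_full_square)
  show "S \<subseteq> {(x1, x2, x3), (y1, y2, x3), (x1, y2, \<alpha> 3), (y1, x2, z3)}"
    using assms(1) by (auto simp: V_def alpha_y2)
  show "x2 \<noteq> y2" "x3 \<noteq> \<alpha> 3" "x3 \<noteq> z3" "\<alpha> 3 \<noteq> z3"
    by (simp_all add: indices_def flip: alpha_y2 alpha_z3)
qed (use x1_y1 assms(2-4) in auto)

theorem not_full_two_points:
  assumes fin: "finite S" and sub: "S \<subseteq> T"
    and q: "q \<in> S" and q': "q' \<in> S" and "q \<noteq> q'"
  shows "\<not> full S"
proof (cases "\<exists>m\<ge>1. S \<inter> level m \<noteq> {}")
  case True
  then obtain n where "1 \<le> n" "S \<inter> level n \<noteq> {}" "\<And>m. n < m \<Longrightarrow> S \<inter> level m = {}"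
    using top_level_exists[OF fin] by metis
  then show ?thesis using not_full_top_level sub q q' \<open>q \<noteq> q'\<close> by blast
next
  case no_levels: False
  show ?thesis
  proof (cases "\<exists>k\<ge>2. V k \<in> S")
    case True
    then obtain k where "2 \<le> k" "V k \<in> S" by blast
    moreover obtain p where "p \<in> {q, q'}" "p \<noteq> V k" using \<open>q \<noteq> q'\<close> by blast
    ultimately show ?thesis using not_full_high_V sub no_levels q q' by blast
  next
    case False
    have "S \<subseteq> {(x1, x2, x3), (y1, y2, x3), (y1, x2, z3), V 1}"
    proof
      fix w assume w: "w \<in> S"
      with sub have "w \<in> T" by blast
      then show "w \<in> {(x1, x2, x3), (y1, y2, x3), (y1, x2, z3), V 1}"
      proof (cases rule: setT_cases)
        case (3 m)
        with False w have "\<not> 2 \<le> m" by blast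
        with 3 have "m = 1" by simp
        with 3 show ?thesis by simp
      qed (use no_levels w in auto)
    qed
    then show ?thesis using not_full_base q q' \<open>q \<noteq> q'\<close> by blast
  qed
qed

end

lemma construction_intro:
  assumes "x1 \<noteq> y1" and inj: "inj_on \<alpha> {1..}"
    and avoids: "\<And>i. 1 \<le> i \<Longrightarrow> \<alpha> i \<notin> {x1, y1, x2, y2, x3, z3}"
    and "y2 \<notin> {x1, y1, x2, x3, z3}" "z3 \<notin> {x1, y1, x2, x3}"
    and "\<alpha> (-3) = y2" "\<alpha> (-2) = z3"
  shows "construction x1 y1 x2 y2 x3 z3 \<alpha>"
proof
  have "y2 \<notin> \<alpha> ` {1..}" "z3 \<notin> \<alpha> ` {1..}" "y2 \<noteq> z3"
    using avoids assms(4) by auto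
  moreover have indices_eq: "indices = insert (-3) (insert (-2) {1..})"
    by (auto simp: indices_def)
  ultimately show "inj_on \<alpha> indices"
    using inj assms(6,7) unfolding indices_eq by (simp add: inj_on_insert insert_Diff_if)
  show "\<alpha> i \<notin> {x1, y1, x2, x3}" if "i \<in> indices" for i
    using that avoids assms(4-7) unfolding indices_def by auto
qed (use assms in auto)

theorem mainTheorem4:
  fixes X1 X2 X3 :: "'a set" and x1 y1 x2 y2 x3 z3 :: 'a and \<alpha> :: "int \<Rightarrow> 'a"
  assumes "X1 \<noteq> {}" "X2 \<noteq> {}" "X3 \<noteq> {}"
    and disjoint: "X1 \<inter> X2 = {}" "X1 \<inter> X3 = {}" "X2 \<inter> X3 = {}"
    and members: "x1 \<in> X1" "y1 \<in> X1" "x2 \<in> X2" "y2 \<in> X2" "x3 \<in> X3" "z3 \<in> X3"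
    and "\<And>k. k \<ge> 1 \<Longrightarrow> \<alpha> (5*k-4) \<in> X1 \<and> \<alpha> (5*k-1) \<in> X1 \<and> \<alpha> (5*k-3) \<in> X2
                        \<and> \<alpha> (5*k) \<in> X2 \<and> \<alpha> (5*k-2) \<in> X3"
    and distinct: "x1 \<noteq> y1" "x2 \<noteq> y2" "x3 \<noteq> z3"
    and inj: "inj_on \<alpha> {1..}"
    and avoids: "\<And>i. i \<ge> 1 \<Longrightarrow> \<alpha> i \<notin> {x1, y1, x2, y2, x3, z3}"
    and boundary: "\<alpha> (-3) = y2" "\<alpha> (-2) = z3"
  shows "\<forall>S. finite S \<and> S \<subseteq> setT x1 y1 x2 y2 x3 z3 \<alpha> \<and> card S \<ge> 2 \<longrightarrow> \<not> full S"
proof (intro allI impI)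
  fix S assume S: "finite S \<and> S \<subseteq> setT x1 y1 x2 y2 x3 z3 \<alpha> \<and> card S \<ge> 2"
  have "y2 \<notin> {x1, y1, x2, x3, z3}" and "z3 \<notin> {x1, y1, x2, x3}"
    using disjoint members distinct by blast+
  from construction_intro[OF distinct(1) inj avoids this boundary]
  have constr: "construction x1 y1 x2 y2 x3 z3 \<alpha>" .
  from S have "\<not> card S \<le> Suc 0" by simp
  then obtain q q' where "q \<in> S" "q' \<in> S" "q \<noteq> q'"
    unfolding card_le_Suc0_iff_eq[OF conjunct1[OF S]] by blast
  then show "\<not> full S"
    using construction.not_full_two_points[OF constr] S by simp
qed

end
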